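(* Assume the equation $\partial_tv+A(Av+l(t)v)=0$ satisfies the strong cone condition. Then there exist $C,\gamma>0$ such that for every $T>0$ and every solution $v(t)$, $t\in[0,T]$: (1) if $v(0)\in K^+$ then $v(t)\in K^+$ for all $t\in[0,T]$; (2) if $v(T)\notin K^+$ then $\|v(t)\|_{H^{-1}}\le Ce^{-\gamma t}\|v(0)\|_{H^{-1}}$ for all $t\in[0,T]$, where $C,\gamma$ are independent of $v$ and $T$.
   Context: Let $H$ be a real separable Hilbert space with inner product $(\cdot,\cdot)$ and norm $\|\cdot\|_H$, and let $A:D(A)\to H$ be a linear self-adjoint positive operator with compact inverse, with orthonormal eigenbasis $\{e_n\}$, $Ae_n=\lambda_ne_n$, $0<\lambda_1\le\lambda_2\le\dots\to\infty$. For $s\ge0$, $H^s=D(A^{s/2})$ with $\|u\|_{H^s}^2=\sum_n\lambda_n^s|(u,e_n)|^2$; for $s<0$, the completion of $H$. For fixed $N$: $P_N$ the orthoprojector onto $\mathrm{span}\{e_1,\dots,e_N\}$, $Q_N=\mathrm{Id}-P_N$. $V(\xi)=\|Q_N\xi\|^2_{H^{-1}}-\|P_N\xi\|^2_{H^{-1}}$, $K^+=\{\xi\in H^{-1}:V(\xi)\le0\}$. $l\in L^\infty(\mathbb{R},\mathcal L(H,H))$ with $\|l(t)\|_{\mathcal L(H,H)}\le L$. Strong cone condition for $\partial_tv+A(Av+l(t)v)=0$: there exist $\mu>0$ and $\alpha:\mathbb{R}\to\mathbb{R}$ with $0<\alpha_-\le\alpha(t)\le\alpha_+$ such that every solution $v(t)$,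 $t\in[S,T]$, satisfies $\frac{d}{dt}V(v(t))+\alpha(t)V(v(t))\le-\mu\|v(t)\|_H^2$ for all $t\in[S,T]$. *)

theory Defs
  imports "HOL-Analysis.Analysis"
begin

text \<open>Coordinates with respect to the orthonormal eigenbasis e_0, e_1, ... of A
  (0-indexed), eigenvalues lam n, i.e. A e_n = lam n e_n.  An element u of H^s is
  represented by its coefficient sequence u n = (u, e_n).\<close>

definition eigenvalues :: "(nat \<Rightarrow> real) \<Rightarrow> bool" where
  "eigenvalues lam \<longleftrightarrow> 0 < lam 0 \<and> mono lam \<and> filterlim lam at_top sequentially"

definition in_H :: "(nat \<Rightarrow> real) \<Rightarrow> real \<Rightarrow> (nat \<Rightarrow> real) \<Rightarrow> bool" where
  "in_H lam s u \<longleftrightarrow> summable (\<lambda>n. lam n powr s * (u n)\<^sup>2)"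

definition Hnorm :: "(nat \<Rightarrow> real) \<Rightarrow> real \<Rightarrow> (nat \<Rightarrow> real) \<Rightarrow> real" where
  "Hnorm lam s u = sqrt (\<Sum>n. lam n powr s * (u n)\<^sup>2)"

text \<open>V(xi) = |Q_N xi|^2_{H^{-1}} - |P_N xi|^2_{H^{-1}}, P_N = projection on e_0..e_{N-1}.\<close>
definition Vfun :: "(nat \<Rightarrow> real) \<Rightarrow> nat \<Rightarrow> (nat \<Rightarrow> real) \<Rightarrow> real" where
  "Vfun lam N u = (\<Sum>n. (if n < N then -1 else 1) * lam n powr (-1) * (u n)\<^sup>2)"

definition Kplus :: "(nat \<Rightarrow> real) \<Rightarrow> nat \<Rightarrow> (nat \<Rightarrow> real) set" where
  "Kplus lam N = {u. in_H lam (-1) u \<and> Vfun lam N u \<le> 0}"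

definition bounded_op_family ::
  "(nat \<Rightarrow> real) \<Rightarrow> (real \<Rightarrow> (nat \<Rightarrow> real) \<Rightarrow> (nat \<Rightarrow> real)) \<Rightarrow> real \<Rightarrow> bool" where
  "bounded_op_family lam l L \<longleftrightarrow>
     (\<forall>t u. in_H lam 0 u \<longrightarrow> in_H lam 0 (l t u) \<and> Hnorm lam 0 (l t u) \<le> L * Hnorm lam 0 u) \<and>
     (\<forall>t u w a b. in_H lam 0 u \<and> in_H lam 0 w \<longrightarrow>
        l t (\<lambda>n. a * u n + b * w n) = (\<lambda>n. a * l t u n + b * l t w n)) \<and>
     (\<forall>u n. in_H lam 0 u \<longrightarrow> (\<lambda>t. l t u n) \<in> borel_measurable lborel)"

text \<open>(Energy) solution of  d/dt v + A(A v + l(t) v) = 0  on [S,T]: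
  v in C([S,T];H^{-1}) \<inter> L^2(S,T;H^1), and the equation holds in integrated form
  coordinatewise: (v(t),e_n) - (v(S),e_n) = int_S^t (-lam_n^2 (v,e_n) - lam_n (l v, e_n)).\<close>
definition solution ::
  "(nat \<Rightarrow> real) \<Rightarrow> (real \<Rightarrow> (nat \<Rightarrow> real) \<Rightarrow> (nat \<Rightarrow> real)) \<Rightarrow> real \<Rightarrow> real \<Rightarrow>
   (real \<Rightarrow> nat \<Rightarrow> real) \<Rightarrow> bool" where
  "solution lam l S T v \<longleftrightarrow>
     S \<le> T \<and>
     (\<forall>t\<in>{S..T}. in_H lam (-1) (v t)) \<and>
     (\<forall>t\<in>{S..T}. ((\<lambda>s. Hnorm lam (-1) (\<lambda>n. v s n - v t n)) \<longlongrightarrow> 0) (at t within {S..T})) \<and>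
     (AE t in lebesgue. t \<in> {S..T} \<longrightarrow> in_H lam 1 (v t)) \<and>
     (\<lambda>t. (Hnorm lam 1 (v t))\<^sup>2) integrable_on {S..T} \<and>
     (\<forall>n. \<forall>t\<in>{S..T}.
        ((\<lambda>r. - (lam n)\<^sup>2 * v r n - lam n * l r (v r) n) has_integral (v t n - v S n)) {S..t})"

definition strong_cone_condition ::
  "(nat \<Rightarrow> real) \<Rightarrow> nat \<Rightarrow> (real \<Rightarrow> (nat \<Rightarrow> real) \<Rightarrow> (nat \<Rightarrow> real)) \<Rightarrow> bool" where
  "strong_cone_condition lam N l \<longleftrightarrow>
     (\<exists>\<mu>>0. \<exists>\<alpha> am ap. 0 < am \<and> (\<forall>t. am \<le> \<alpha> t \<and> \<alpha> t \<le> ap) \<and>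
       (\<forall>S T v. solution lam l S T v \<longrightarrow>
          (AE t in lebesgue. t \<in> {S..T} \<longrightarrow>
             (\<exists>D. ((\<lambda>s. Vfun lam N (v s)) has_real_derivative D) (at t within {S..T}) \<and>
                  D + \<alpha> t * Vfun lam N (v t) \<le> - \<mu> * (Hnorm lam 0 (v t))\<^sup>2))))"

end

theory Submission
  imports Defs
begin

text \<open>Along a solution write W(t) = V(v(t)) and E(t) = |v(t)|^2 in H^-1. Differentiating the
  coefficient series term by term shows that both are absolutely continuous, and almost everywhere
  the derivative of W is the one occurring in the cone condition. Wherever W > 0 the cone
  inequality then gives W' \<le> -alpha_- W, W' \<le> -mu lam_1 E and E' \<le> (1 + L^2)/mu (-W').
  The first estimate shows that W \<le> 0 persists forward in time, which is the invariance of K+.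
  If v(T) is outside K+, then W > 0 on all of [0, T] and W decays exponentially; since the mean of
  E over a unit interval is at most W/(mu lam_1) and E grows afterwards by at most (1 + L^2)/mu W,
  E is bounded by W one time unit earlier, and so E decays exponentially as well.\<close>

section \<open>Real functions on an interval\<close>

lemma has_integral_between:
  fixes g F :: "real \<Rightarrow> real"
  assumes F: "\<And>t. t \<in> {a..b} \<Longrightarrow> (g has_integral (F t - F a)) {a..t}"
    and "a \<le> s" "s \<le> t" "t \<le> b"
  shows "(g has_integral (F t - F s)) {s..t}"
proof -
  have "(g has_integral (F t - F a)) {a..t}"
    using F assms by auto
  then have gt: "g integrable_on {a..t}"
    by (rule has_integral_integrable)
  have "integral {a..s} g + integral {s..t} g = integral {a..t} g"
    using Henstock_Kurzweil_Integration.integral_combine[OF _ _ gt, of s] assms by simp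
  moreover have "integral {a..t} g = F t - F a" "integral {a..s} g = F s - F a"
    using F[of t] F[of s] assms by (simp_all add: integral_unique)
  ultimately have "integral {s..t} g = F t - F s"
    by simp
  moreover have "g integrable_on {s..t}"
    using integrable_on_subinterval[OF gt, of s t] assms by auto
  ultimately show ?thesis
    by (metis integrable_integral)
qed

lemma integral_diff_subinterval:
  fixes h :: "real \<Rightarrow> real"
  assumes h: "h integrable_on {a..b}" and "a \<le> x" "x \<le> y" "y \<le> b"
  shows "integral {a..y} h - integral {a..x} h = integral {x..y} h"
  using Henstock_Kurzweil_Integration.integral_combine[of a x y h]
    integrable_on_subinterval[OF h, of a y] assms by auto

lemma continuous_on_indefinite_integral:
  fixes g F :: "real \<Rightarrow> real"
  assumes F: "\<And>t. t \<in> {a..b} \<Longrightarrow> (g has_integral (F t - F a)) {a..t}"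
  shows "continuous_on {a..b} F"
proof (cases "a \<le> b")
  case True
  then have "g integrable_on {a..b}"
    using F[of b] by auto
  then have "continuous_on {a..b} (\<lambda>t. F a + integral {a..t} g)"
    by (intro continuous_intros indefinite_integral_continuous_1)
  moreover have "F a + integral {a..t} g = F t" if "t \<in> {a..b}" for t
    using integral_unique[OF F[OF that]] by simp
  ultimately show ?thesis
    by (metis (no_types, lifting) continuous_on_cong)
qed simp

lemma continuous_on_has_integral_subinterval:
  fixes h :: "real \<Rightarrow> real"
  assumes "continuous_on {a..b} h" "a \<le> s" "t \<le> b"
  shows "(h has_integral integral {s..t} h) {s..t}"
proof -
  have "continuous_on {s..t} h"
    using assms(1) by (rule continuous_on_subset) (use assms in auto)
  then show ?thesis
    by (rule integrable_integral[OF integrable_continuous_real])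
qed

lemma has_integral_le_ae:
  fixes f g :: "'a::euclidean_space \<Rightarrow> real"
  assumes f: "(f has_integral I) S" and g: "(g has_integral J) S"
    and le: "AE x in lebesgue. x \<in> S \<longrightarrow> f x \<le> g x"
  shows "I \<le> J"
proof -
  obtain Z where Z: "negligible Z" and hZ: "{x. \<not> (x \<in> S \<longrightarrow> f x \<le> g x)} \<subseteq> Z"
    using le unfolding eventually_ae_filter_negligible by blast
  define f' where "f' x = (if x \<in> Z then 0 else f x)" for x
  define g' where "g' x = (if x \<in> Z then 0 else g x)" for x
  have "(f' has_integral I) S"
    by (rule has_integral_spike[OF Z _ f]) (simp add: f'_def)
  moreover have "(g' has_integral J) S"
    by (rule has_integral_spike[OF Z _ g]) (simp add: g'_def)
  ultimately show ?thesis
    by (rule has_integral_le) (use hZ in \<open>auto simp: f'_def g'_def\<close>)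
qed

lemma absolutely_integrable_bound_ae:
  fixes f g :: "'a::euclidean_space \<Rightarrow> real"
  assumes f: "f integrable_on S" and g: "g integrable_on S"
    and le: "AE x in lebesgue. x \<in> S \<longrightarrow> \<bar>f x\<bar> \<le> g x"
  shows "f absolutely_integrable_on S"
proof -
  obtain Z where Z: "negligible Z" and hZ: "{x. \<not> (x \<in> S \<longrightarrow> \<bar>f x\<bar> \<le> g x)} \<subseteq> Z"
    using le unfolding eventually_ae_filter_negligible by blast
  define f' where "f' x = (if x \<in> Z then 0 else f x)" for x
  define g' where "g' x = (if x \<in> Z then 0 else g x)" for x
  have "f' absolutely_integrable_on S"
  proof (rule absolutely_integrable_integrable_bound)
    show "f' integrable_on S"
      by (rule integrable_spike[OF f Z]) (simp add: f'_def)
    show "g' integrable_on S"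
      by (rule integrable_spike[OF g Z]) (simp add: g'_def)
    show "norm (f' x) \<le> g' x" if "x \<in> S" for x
      using hZ that by (auto simp: f'_def g'_def)
  qed
  then show ?thesis
    by (rule absolutely_integrable_spike[OF _ Z]) (simp add: f'_def)
qed

lemma has_integral_dominated_convergence_ae:
  fixes f :: "nat \<Rightarrow> 'a::euclidean_space \<Rightarrow> real"
  assumes f: "\<And>k. (f k has_integral y k) S" and h: "h integrable_on S"
    and ae: "AE x in lebesgue. x \<in> S \<longrightarrow> (\<forall>k. \<bar>f k x\<bar> \<le> h x) \<and> (\<lambda>k. f k x) \<longlonglongrightarrow> g x"
    and y: "y \<longlonglongrightarrow> I"
  shows "(g has_integral I) S"
proof -
  obtain Z where Z: "negligible Z"
    and hZ: "{x. \<not> (x \<in> S \<longrightarrow> (\<forall>k. \<bar>f k x\<bar> \<le> h x) \<and> (\<lambda>k. f k x) \<longlonglongrightarrow> g x)} \<subseteq> Z"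
    using ae unfolding eventually_ae_filter_negligible by blast
  define f' where "f' k x = (if x \<in> Z then 0 else f k x)" for k x
  define h' where "h' x = (if x \<in> Z then 0 else h x)" for x
  define g' where "g' x = (if x \<in> Z then 0 else g x)" for x
  have g': "(g' has_integral I) S"
  proof (rule has_integral_dominated_convergence[OF _ _ _ _ y])
    show "(f' k has_integral y k) S" for k
      by (rule has_integral_spike[OF Z _ f]) (simp add: f'_def)
    show "h' integrable_on S"
      by (rule integrable_spike[OF h Z]) (simp add: h'_def)
    show "\<forall>x\<in>S. norm (f' k x) \<le> h' x" for k
      using hZ by (auto simp: f'_def h'_def)
    show "\<forall>x\<in>S. (\<lambda>k. f' k x) \<longlonglongrightarrow> g' x"
      using hZ by (auto simp: f'_def g'_def)
  qed
  show ?thesis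
    by (rule has_integral_spike[OF Z _ g']) (simp add: g'_def)
qed

lemma increment_bound_of_local:
  fixes D M :: "real \<Rightarrow> real"
  assumes d: "0 < d"
    and local: "\<And>x y. a \<le> x \<Longrightarrow> x \<le> y \<Longrightarrow> y \<le> b \<Longrightarrow> y - x < d \<Longrightarrow>
                  \<bar>D y - D x\<bar> \<le> e * (M y - M x)"
    and xy: "a \<le> x" "x \<le> y" "y \<le> b"
  shows "\<bar>D y - D x\<bar> \<le> e * (M y - M x)"
proof -
  have "\<forall>x y. a \<le> x \<longrightarrow> x \<le> y \<longrightarrow> y \<le> b \<longrightarrow> y - x < real n * (d/2) \<longrightarrow>
      \<bar>D y - D x\<bar> \<le> e * (M y - M x)" for n
  proof (induction n)
    case (Suc n)
    show ?case
    proof (intro allI impI)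
      fix x y assume xy: "a \<le> x" "x \<le> y" "y \<le> b" "y - x < real (Suc n) * (d/2)"
      show "\<bar>D y - D x\<bar> \<le> e * (M y - M x)"
      proof (cases "y - x < d")
        case False
        define c where "c = x + d/2"
        have c: "x \<le> c" "c \<le> y" "c - x < d" "y - c < real n * (d/2)"
          using False d xy(4) by (auto simp: c_def algebra_simps)
        have "\<bar>D c - D x\<bar> \<le> e * (M c - M x)"
          using local[of x c] xy c by auto
        moreover have "\<bar>D y - D c\<bar> \<le> e * (M y - M c)"
          using Suc.IH xy c by auto
        ultimately show ?thesis
          by (simp add: algebra_simps)
      qed (use local xy in blast)
    qed
  qed simp
  moreover obtain n where "(y - x) / (d/2) < real n"
    using reals_Archimedean2 by blast
  then have "y - x < real n * (d/2)"
    using d by (simp add: field_simps)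
  ultimately show ?thesis
    using xy by auto
qed

lemma eq_if_increments_dominated:
  fixes D M :: "real \<Rightarrow> real"
  assumes ab: "a \<le> b"
    and mono: "\<And>x y. a \<le> x \<Longrightarrow> x \<le> y \<Longrightarrow> y \<le> b \<Longrightarrow> M x \<le> M y"
    and local: "\<And>e. e > 0 \<Longrightarrow> \<exists>d>0. \<forall>x y. a \<le> x \<longrightarrow> x \<le> y \<longrightarrow> y \<le> b \<longrightarrow> y - x < d \<longrightarrow>
                  \<bar>D y - D x\<bar> \<le> e * (M y - M x)"
  shows "D b = D a"
proof -
  have global: "\<bar>D b - D a\<bar> \<le> e * (M b - M a)" if e: "e > 0" for e
  proof -
    obtain d where d: "d > 0" and hd: "\<And>x y. a \<le> x \<Longrightarrow> x \<le> y \<Longrightarrow> y \<le> b \<Longrightarrow> y - x < d \<Longrightarrow>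
        \<bar>D y - D x\<bar> \<le> e * (M y - M x)"
      using local[OF e] by blast
    show ?thesis
      by (rule increment_bound_of_local[OF d hd]) (use ab in auto)
  qed
  have M: "0 \<le> M b - M a"
    using mono[of a b] ab by auto
  show ?thesis
  proof (rule ccontr)
    assume "D b \<noteq> D a"
    then have pos: "\<bar>D b - D a\<bar> > 0"
      by simp
    define e where "e = \<bar>D b - D a\<bar> / (2 * (M b - M a + 1))"
    have "e > 0"
      using pos M by (simp add: e_def)
    then have "\<bar>D b - D a\<bar> \<le> e * (M b - M a)"
      by (rule global)
    also have "\<dots> = \<bar>D b - D a\<bar> * ((M b - M a) / (2 * (M b - M a + 1)))"
      by (simp add: e_def)
    also have "\<dots> < \<bar>D b - D a\<bar> * 1"
      using pos M by (intro mult_strict_left_mono) (auto simp: field_simps)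
    finally show False
      by simp
  qed
qed

lemma square_increment_estimate:
  fixes F f :: "real \<Rightarrow> real"
  assumes f: "(f has_integral (F y - F x)) {x..y}"
    and G: "(\<lambda>r. 2 * F r * f r) integrable_on {x..y}"
    and abs_f: "(\<lambda>r. \<bar>f r\<bar>) integrable_on {x..y}"
    and close: "\<And>r. r \<in> {x..y} \<Longrightarrow> \<bar>F x - F r\<bar> \<le> e \<and> \<bar>F y - F r\<bar> \<le> e"
  shows "\<bar>F y ^ 2 - F x ^ 2 - integral {x..y} (\<lambda>r. 2 * F r * f r)\<bar>
           \<le> 2 * e * integral {x..y} (\<lambda>r. \<bar>f r\<bar>)"
proof -
  have fi: "(\<lambda>r. (F y + F x) * f r) integrable_on {x..y}"
    using f by (intro integrable_on_mult_right) auto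
  have "F y ^ 2 - F x ^ 2 = (F y + F x) * (F y - F x)"
    by (simp add: power2_eq_square algebra_simps)
  also have "\<dots> = integral {x..y} (\<lambda>r. (F y + F x) * f r)"
    using integral_unique[OF f] by simp
  finally have "F y ^ 2 - F x ^ 2 - integral {x..y} (\<lambda>r. 2 * F r * f r)
      = integral {x..y} (\<lambda>r. (F y + F x - 2 * F r) * f r)"
    using integral_diff[OF fi G] by (simp add: algebra_simps)
  also have "\<bar>\<dots>\<bar> \<le> integral {x..y} (\<lambda>r. 2 * e * \<bar>f r\<bar>)"
  proof -
    have "norm (integral {x..y} (\<lambda>r. (F y + F x - 2 * F r) * f r))
        \<le> integral {x..y} (\<lambda>r. 2 * e * \<bar>f r\<bar>)"
    proof (rule integral_norm_bound_integral)
      show "(\<lambda>r. (F y + F x - 2 * F r) * f r) integrable_on {x..y}"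
        using integrable_diff[OF fi G] by (simp add: algebra_simps)
      show "(\<lambda>r. 2 * e * \<bar>f r\<bar>) integrable_on {x..y}"
        using abs_f by (rule integrable_on_mult_right)
      fix r assume "r \<in> {x..y}"
      then have "\<bar>F y + F x - 2 * F r\<bar> \<le> 2 * e"
        using close by fastforce
      then show "norm ((F y + F x - 2 * F r) * f r) \<le> 2 * e * \<bar>f r\<bar>"
        by (simp add: abs_mult mult_right_mono)
    qed
    then show ?thesis
      by simp
  qed
  finally show ?thesis
    by simp
qed

lemma absolutely_integrable_continuous_mult:
  fixes F f :: "real \<Rightarrow> real"
  assumes F: "continuous_on {a..b} F" and f: "f absolutely_integrable_on {a..b}"
  shows "(\<lambda>r. F r * f r) absolutely_integrable_on {a..b}"
proof (rule absolutely_integrable_bounded_measurable_product_real)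
  show "F \<in> borel_measurable (lebesgue_on {a..b})"
    by (rule continuous_imp_measurable_on_sets_lebesgue[OF F]) simp
  show "bounded (F ` {a..b})"
    by (intro compact_imp_bounded compact_continuous_image F) simp
qed (use f in auto)

lemma square_increments_small:
  fixes F f :: "real \<Rightarrow> real"
  assumes f: "f absolutely_integrable_on {a..b}"
    and F: "\<And>t. t \<in> {a..b} \<Longrightarrow> (f has_integral (F t - F a)) {a..t}"
    and e: "0 < e"
  obtains d where "0 < d"
    "\<And>x y. a \<le> x \<Longrightarrow> x \<le> y \<Longrightarrow> y \<le> b \<Longrightarrow> y - x < d \<Longrightarrow>
      \<bar>F y ^ 2 - F x ^ 2 - integral {x..y} (\<lambda>r. 2 * F r * f r)\<bar> \<le> e * integral {x..y} (\<lambda>r. \<bar>f r\<bar>)"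
proof -
  have F_cont: "continuous_on {a..b} F"
    using F by (rule continuous_on_indefinite_integral)
  then have "uniformly_continuous_on {a..b} F"
    by (rule compact_uniformly_continuous[OF _ compact_Icc])
  then obtain d where d: "0 < d" and hd: "\<And>x x'. x \<in> {a..b} \<Longrightarrow> x' \<in> {a..b} \<Longrightarrow>
      dist x' x < d \<Longrightarrow> dist (F x') (F x) < e/2"
    using e by (auto simp: uniformly_continuous_on_def dest: spec[of _ "e/2"])
  have "(\<lambda>r. F r * f r) integrable_on {a..b}"
    using absolutely_integrable_continuous_mult[OF F_cont f] absolutely_integrable_on_def by blast
  then have G: "(\<lambda>r. 2 * F r * f r) integrable_on {a..b}"
    using integrable_on_mult_right[of "\<lambda>r. F r * f r" "{a..b}" 2] by (simp add: mult.assoc)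
  have abs_f: "(\<lambda>r. \<bar>f r\<bar>) integrable_on {a..b}"
    using f unfolding absolutely_integrable_on_def by simp
  show ?thesis
  proof (rule that[OF d])
    fix x y assume xy: "a \<le> x" "x \<le> y" "y \<le> b" "y - x < d"
    have "\<bar>F y ^ 2 - F x ^ 2 - integral {x..y} (\<lambda>r. 2 * F r * f r)\<bar>
        \<le> 2 * (e/2) * integral {x..y} (\<lambda>r. \<bar>f r\<bar>)"
    proof (rule square_increment_estimate)
      show "(f has_integral (F y - F x)) {x..y}"
        using has_integral_between[where a=a and b=b and s=x and t=y, OF F] xy by auto
      show "(\<lambda>r. 2 * F r * f r) integrable_on {x..y}" "(\<lambda>r. \<bar>f r\<bar>) integrable_on {x..y}"
        using integrable_on_subinterval[OF G, of x y] integrable_on_subinterval[OF abs_f, of x y] xy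
        by auto
      fix r assume "r \<in> {x..y}"
      then have "dist x r < d" "dist y r < d" "r \<in> {a..b}" "x \<in> {a..b}" "y \<in> {a..b}"
        using xy by (auto simp: dist_real_def)
      then have "dist (F x) (F r) < e/2" "dist (F y) (F r) < e/2"
        using hd by blast+
      then show "\<bar>F x - F r\<bar> \<le> e/2 \<and> \<bar>F y - F r\<bar> \<le> e/2"
        by (simp add: dist_real_def)
    qed
    then show "\<bar>F y ^ 2 - F x ^ 2 - integral {x..y} (\<lambda>r. 2 * F r * f r)\<bar>
        \<le> e * integral {x..y} (\<lambda>r. \<bar>f r\<bar>)"
      by simp
  qed
qed

text \<open>The chain rule for the square of an absolutely continuous function: by the previous lemma
  the increments of F^2 - \<integral> 2 F f are dominated by arbitrarily small multiples of those
  of \<integral> |f|.\<close>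

lemma indefinite_integral_square:
  fixes F f :: "real \<Rightarrow> real"
  assumes f: "f absolutely_integrable_on {a..b}"
    and F: "\<And>t. t \<in> {a..b} \<Longrightarrow> (f has_integral (F t - F a)) {a..t}"
    and t: "t \<in> {a..b}"
  shows "((\<lambda>r. 2 * F r * f r) has_integral (F t ^ 2 - F a ^ 2)) {a..t}"
proof -
  define G where "G = (\<lambda>r. 2 * F r * f r)"
  have "(\<lambda>r. F r * f r) integrable_on {a..b}"
    using absolutely_integrable_continuous_mult[OF continuous_on_indefinite_integral[OF F] f]
      absolutely_integrable_on_def by blast
  then have G_ab: "G integrable_on {a..b}"
    using integrable_on_mult_right[of "\<lambda>r. F r * f r" "{a..b}" 2] by (simp add: G_def mult.assoc)
  have abs_f_ab: "(\<lambda>r. \<bar>f r\<bar>) integrable_on {a..b}"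
    using f unfolding absolutely_integrable_on_def by simp
  define D where "D x = F x ^ 2 - integral {a..x} G" for x
  define M where "M x = integral {a..x} (\<lambda>r. \<bar>f r\<bar>)" for x
  have tb: "a \<le> t" "t \<le> b"
    using t by auto
  have "D t = D a"
  proof (rule eq_if_increments_dominated[OF tb(1)])
    show "M x \<le> M y" if "a \<le> x" "x \<le> y" "y \<le> t" for x y
    proof -
      have "0 \<le> integral {x..y} (\<lambda>r. \<bar>f r\<bar>)"
        using integrable_on_subinterval[OF abs_f_ab, of x y] that tb by (intro integral_nonneg) auto
      then show ?thesis
        using integral_diff_subinterval[OF abs_f_ab, of x y] that tb by (simp add: M_def)
    qed
    fix e :: real assume "e > 0"
    then obtain d where d: "0 < d" and hd: "\<And>x y. a \<le> x \<Longrightarrow> x \<le> y \<Longrightarrow> y \<le> b \<Longrightarrow> y - x < d \<Longrightarrow>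
        \<bar>F y ^ 2 - F x ^ 2 - integral {x..y} G\<bar> \<le> e * integral {x..y} (\<lambda>r. \<bar>f r\<bar>)"
      using square_increments_small[OF f F] unfolding G_def by blast
    show "\<exists>d>0. \<forall>x y. a \<le> x \<longrightarrow> x \<le> y \<longrightarrow> y \<le> t \<longrightarrow> y - x < d \<longrightarrow>
        \<bar>D y - D x\<bar> \<le> e * (M y - M x)"
    proof (intro exI[of _ d] conjI allI impI d)
      fix x y assume xy: "a \<le> x" "x \<le> y" "y \<le> t" "y - x < d"
      then show "\<bar>D y - D x\<bar> \<le> e * (M y - M x)"
        using hd[of x y] integral_diff_subinterval[OF G_ab, of x y] integral_diff_subinterval[OF abs_f_ab, of x y] tb
        by (simp add: D_def M_def)
    qed
  qed
  then have "integral {a..t} G = F t ^ 2 - F a ^ 2"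
    by (simp add: D_def)
  moreover have "G integrable_on {a..t}"
    using integrable_on_subinterval[OF G_ab] tb by auto
  ultimately have "(G has_integral (F t ^ 2 - F a ^ 2)) {a..t}"
    by (metis integrable_integral)
  then show ?thesis
    by (simp add: G_def)
qed

lemma derivative_eq_right_quotient_limit:
  fixes W :: "real \<Rightarrow> real"
  assumes x: "x \<in> {a<..<b}" and W: "(W has_real_derivative D) (at x within {a..b})"
    and lim: "((\<lambda>h. (W (x + h) - W x) / h) \<longlongrightarrow> c) (at_right 0)"
  shows "D = c"
proof -
  have "at x within {a..b} = at x"
    using x by (intro at_within_interior) auto
  then have "((\<lambda>h. (W (x + h) - W x) / h) \<longlongrightarrow> D) (at 0)"
    using W by (simp add: DERIV_def)
  then have "((\<lambda>h. (W (x + h) - W x) / h) \<longlongrightarrow> D) (at_right 0)"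
    by (rule filterlim_at_split[THEN iffD1, THEN conjunct2])
  then show ?thesis
    using lim by (rule tendsto_unique[OF trivial_limit_at_right_real])
qed

lemma right_quotient_tendsto_integrand:
  fixes g W :: "real \<Rightarrow> real"
  assumes W: "\<And>t. t \<in> {a..b} \<Longrightarrow> (g has_integral (W t - W a)) {a..t}"
    and x: "x \<in> {a<..<b}"
    and lebesgue_point: "\<And>e. 0 < e \<Longrightarrow>
      \<exists>d>0. \<forall>h. 0 < h \<and> h < d \<longrightarrow> \<bar>integral {x..x + h} g / h - g x\<bar> < e"
  shows "((\<lambda>h. (W (x + h) - W x) / h) \<longlongrightarrow> g x) (at_right 0)"
proof (rule tendstoI)
  fix e :: real assume "e > 0"
  then obtain d where d: "d > 0"
    and hd: "\<And>h. 0 < h \<Longrightarrow> h < d \<Longrightarrow> \<bar>integral {x..x + h} g / h - g x\<bar> < e"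
    using lebesgue_point by blast
  show "\<forall>\<^sub>F h in at_right 0. dist ((W (x + h) - W x) / h) (g x) < e"
    unfolding eventually_at_right_field
  proof (intro exI[of _ "min d (b - x)"] conjI allI impI)
    show "0 < min d (b - x)"
      using d x by auto
    fix h :: real assume h: "0 < h" "h < min d (b - x)"
    have "integral {x..x + h} g = W (x + h) - W x"
      using has_integral_between[where a=a and b=b and s=x and t="x + h", OF W] x h
      by (simp add: integral_unique)
    then show "dist ((W (x + h) - W x) / h) (g x) < e"
      using hd[of h] h by (simp add: dist_real_def)
  qed
qed

text \<open>Lebesgue's differentiation theorem, in the form of integrable_ccontinuous_explicit.\<close>

lemma derivative_eq_integrand_ae:
  fixes g W :: "real \<Rightarrow> real"
  assumes W: "\<And>t. t \<in> {a..b} \<Longrightarrow> (g has_integral (W t - W a)) {a..t}"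
  shows "AE x in lebesgue. x \<in> {a<..<b} \<longrightarrow>
           (\<forall>D. (W has_real_derivative D) (at x within {a..b}) \<longrightarrow> D = g x)"
proof -
  define g0 where "g0 r = (if r \<in> {a..b} then g r else 0)" for r
  have "g integrable_on {a..b}"
    using W[of b] by (cases "a \<le> b") auto
  then have "g0 integrable_on UNIV"
    unfolding g0_def using integrable_restrict_UNIV by blast
  then have g0_cbox: "g0 integrable_on cbox c d" for c d :: real
    by (rule integrable_on_subcbox) auto
  obtain Z where Z: "negligible Z"
    and hZ: "\<And>x e. x \<notin> Z \<Longrightarrow> 0 < e \<Longrightarrow> \<exists>d>0. \<forall>h. 0 < h \<and> h < d \<longrightarrow>
        norm (integral (cbox x (x + h *\<^sub>R One)) g0 /\<^sub>R h ^ DIM(real) - g0 x) < e"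
    by (rule integrable_ccontinuous_explicit[of g0, OF g0_cbox]) blast
  have "D = g x"
    if x: "x \<in> {a<..<b}" "x \<notin> Z" and D: "(W has_real_derivative D) (at x within {a..b})" for x D
  proof (rule derivative_eq_right_quotient_limit[OF x(1) D right_quotient_tendsto_integrand[OF W x(1)]])
    fix e :: real assume "0 < e"
    then obtain d where d: "d > 0" and hd: "\<And>h. 0 < h \<Longrightarrow> h < d \<Longrightarrow>
        norm (integral (cbox x (x + h *\<^sub>R One)) g0 /\<^sub>R h ^ DIM(real) - g0 x) < e"
      using hZ[OF x(2)] by blast
    show "\<exists>d>0. \<forall>h. 0 < h \<and> h < d \<longrightarrow> \<bar>integral {x..x + h} g / h - g x\<bar> < e"
    proof (intro exI[of _ "min d (b - x)"] conjI allI impI)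
      show "0 < min d (b - x)"
        using d x by auto
      fix h :: real assume h: "0 < h \<and> h < min d (b - x)"
      have "integral {x..x + h} g0 = integral {x..x + h} g" "g0 x = g x"
        using x h by (auto simp: g0_def intro: integral_cong)
      then show "\<bar>integral {x..x + h} g / h - g x\<bar> < e"
        using hd[of h] h by (simp add: divide_inverse mult.commute)
    qed
  qed
  then have "{x. \<not> (x \<in> {a<..<b} \<longrightarrow>
      (\<forall>D. (W has_real_derivative D) (at x within {a..b}) \<longrightarrow> D = g x))} \<subseteq> Z"
    by blast
  then show ?thesis
    unfolding eventually_ae_filter_negligible using Z by blast
qed

lemma last_nonpos_point:
  fixes W :: "real \<Rightarrow> real"
  assumes W: "continuous_on {s..t} W" and st: "s \<le> t" and Ws: "W s \<le> 0"
  obtains \<sigma> where "s \<le> \<sigma>" "\<sigma> \<le> t" "W \<sigma> \<le> 0" "\<And>r. \<sigma> < r \<Longrightarrow> r \<le> t \<Longrightarrow> 0 < W r"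
proof -
  define A where "A = {r \<in> {s..t}. W r \<le> 0}"
  have "closed A"
    unfolding A_def using W by (rule continuous_on_closed_Collect_le[OF _ continuous_on_const]) simp
  moreover have A: "s \<in> A" "bdd_above A"
    using st Ws by (auto simp: A_def intro: bdd_aboveI[of _ t])
  ultimately have "Sup A \<in> A"
    using closed_contains_Sup[OF _ A(2)] by blast
  moreover have "0 < W r" if "Sup A < r" "r \<le> t" for r
  proof (rule ccontr)
    assume "\<not> 0 < W r"
    then have "r \<in> A"
      using that \<open>Sup A \<in> A\<close> by (auto simp: A_def)
    then have "r \<le> Sup A"
      using A(2) by (rule cSup_upper)
    then show False
      using that by simp
  qed
  ultimately show ?thesis
    using that by (auto simp: A_def)
qed

section \<open>An abstract Lyapunov pair\<close>

lemma one_le_sq_mult_exp_ln: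
  fixes a t :: real
  assumes a: "0 < a" and t: "t \<le> 1"
  shows "1 \<le> (1 + a)\<^sup>2 * exp (- ln (1 + a) * t)"
proof -
  have "exp (- ln (1 + a)) \<le> exp (- ln (1 + a) * t)"
    using a t mult_left_le[of t "ln (1 + a)"] by simp
  then have "1 / (1 + a) \<le> exp (- ln (1 + a) * t)"
    using a by (simp add: exp_minus inverse_eq_divide)
  then have "(1 + a)\<^sup>2 * (1 / (1 + a)) \<le> (1 + a)\<^sup>2 * exp (- ln (1 + a) * t)"
    by (rule mult_left_mono) simp
  moreover have "1 \<le> (1 + a)\<^sup>2 * (1 / (1 + a))"
    using a by (simp add: power2_eq_square)
  ultimately show ?thesis
    by linarith
qed

text \<open>W and E play the roles of V(v(t)) and |v(t)|^2 in H^-1, with a.e. derivatives W' and E';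
  the dissipation hypothesis is what the cone inequality yields where W > 0.\<close>

locale lyapunov_pair =
  fixes a b K T :: real and W E W' E' :: "real \<Rightarrow> real"
  assumes a_pos: "0 < a" and b_pos: "0 < b" and K_nonneg: "0 \<le> K"
    and W_integral: "\<And>t. t \<in> {0..T} \<Longrightarrow> (W' has_integral (W t - W 0)) {0..t}"
    and E_integral: "\<And>t. t \<in> {0..T} \<Longrightarrow> (E' has_integral (E t - E 0)) {0..t}"
    and W_le_E_0: "W 0 \<le> E 0"
    and dissipation: "AE x in lebesgue. x \<in> {0..T} \<longrightarrow> 0 < W x \<longrightarrow>
          W' x \<le> - a * W x \<and> W' x \<le> - b * E x \<and> E' x \<le> K * - W' x"
begin

lemma W_integral_between: "0 \<le> s \<Longrightarrow> s \<le> t \<Longrightarrow> t \<le> T \<Longrightarrow> (W' has_integral (W t - W s)) {s..t}"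
  using has_integral_between[where a=0 and b=T, OF W_integral] by blast

lemma E_integral_between: "0 \<le> s \<Longrightarrow> s \<le> t \<Longrightarrow> t \<le> T \<Longrightarrow> (E' has_integral (E t - E s)) {s..t}"
  using has_integral_between[where a=0 and b=T, OF E_integral] by blast

lemma W_continuous: "continuous_on {0..T} W"
  using W_integral by (rule continuous_on_indefinite_integral)

lemma E_continuous: "continuous_on {0..T} E"
  using E_integral by (rule continuous_on_indefinite_integral)

text \<open>Invariance of the cone: after the last time at which W is nonpositive, W stays positive,
  so W' is negative there and W cannot have grown.\<close>

lemma W_nonpos_forward:
  assumes st: "0 \<le> s" "s \<le> t" "t \<le> T" and Ws: "W s \<le> 0"
  shows "W t \<le> 0"
proof -
  have "continuous_on {s..t} W"
    by (rule continuous_on_subset[OF W_continuous]) (use st in auto)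
  then obtain \<sigma> where \<sigma>: "s \<le> \<sigma>" "\<sigma> \<le> t" "W \<sigma> \<le> 0"
    and W_pos: "\<And>r. \<sigma> < r \<Longrightarrow> r \<le> t \<Longrightarrow> 0 < W r"
    using st(2) Ws by (rule last_nonpos_point) blast
  have "W t - W \<sigma> \<le> 0"
  proof (rule has_integral_le_ae[OF W_integral_between has_integral_0])
    show "AE x in lebesgue. x \<in> {\<sigma>..t} \<longrightarrow> W' x \<le> 0"
      using dissipation AE_completion[OF AE_lborel_singleton[of \<sigma>]]
    proof eventually_elim
      case (elim x)
      show ?case
      proof
        assume x: "x \<in> {\<sigma>..t}"
        then have "0 < W x"
          using W_pos elim(2) by auto
        moreover have "x \<in> {0..T}"
          using x st \<sigma> by auto
        moreover have "0 < a * W x"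
          using a_pos \<open>0 < W x\<close> by simp
        ultimately show "W' x \<le> 0"
          using elim(1) by linarith
      qed
    qed
  qed (use st \<sigma> in auto)
  then show ?thesis
    using \<sigma> by simp
qed

context
  assumes W_T_pos: "0 < W T"
begin

lemma W_pos: "t \<in> {0..T} \<Longrightarrow> 0 < W t"
  using W_nonpos_forward[of t T] W_T_pos by fastforce

lemma dissipation_pos: "AE x in lebesgue. x \<in> {0..T} \<longrightarrow>
    W' x \<le> - a * W x \<and> W' x \<le> - b * E x \<and> E' x \<le> K * - W' x"
  using dissipation by eventually_elim (simp add: W_pos)

lemma W_antimono:
  assumes "0 \<le> s" "s \<le> t" "t \<le> T"
  shows "W t \<le> W s"
proof -
  have "W t - W s \<le> 0"
  proof (rule has_integral_le_ae[OF W_integral_between[OF assms] has_integral_0])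
    show "AE x in lebesgue. x \<in> {s..t} \<longrightarrow> W' x \<le> 0"
      using dissipation_pos
    proof eventually_elim
      case (elim x)
      show ?case
      proof
        assume "x \<in> {s..t}"
        then have "x \<in> {0..T}"
          using assms by auto
        then have "W' x \<le> - a * W x" "0 < a * W x"
          using elim W_pos[of x] a_pos by simp_all
        then show "W' x \<le> 0"
          by linarith
      qed
    qed
  qed
  then show ?thesis
    by simp
qed

lemma W_step_decay:
  assumes st: "0 \<le> s" "s \<le> t" "t \<le> T"
  shows "W t * (1 + a * (t - s)) \<le> W s"
proof -
  have decrease: "W t - W s \<le> - a * integral {s..t} W"
  proof (rule has_integral_le_ae[OF W_integral_between[OF st]])
    show "((\<lambda>r. - a * W r) has_integral (- a * integral {s..t} W)) {s..t}"
      using continuous_on_has_integral_subinterval[OF W_continuous st(1,3)] by (rule has_integral_mult_right)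
    show "AE x in lebesgue. x \<in> {s..t} \<longrightarrow> W' x \<le> - a * W x"
      using dissipation_pos by eventually_elim (use st in auto)
  qed
  have "(t - s) * W t \<le> integral {s..t} W"
  proof (rule has_integral_le[OF _ continuous_on_has_integral_subinterval[OF W_continuous st(1,3)]])
    show "((\<lambda>_. W t) has_integral ((t - s) * W t)) {s..t}"
      using has_integral_const_real[of "W t" s t] st by simp
    show "W t \<le> W x" if "x \<in> {s..t}" for x
      using W_antimono that st by auto
  qed
  then have "a * ((t - s) * W t) \<le> a * integral {s..t} W"
    using a_pos by (simp add: mult_left_mono)
  moreover have "W t * (1 + a * (t - s)) = W t + a * ((t - s) * W t)"
    by (simp add: algebra_simps)
  ultimately show ?thesis
    using decrease by linarith
qed

lemma W_geometric_decay:
  "0 \<le> s \<Longrightarrow> s \<le> t \<Longrightarrow> t \<le> T \<Longrightarrow> real k \<le> t - s \<Longrightarrow> W t * (1 + a) ^ k \<le> W s"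
proof (induction k arbitrary: s)
  case 0
  then show ?case
    using W_antimono by simp
next
  case (Suc k)
  then have "W t * (1 + a) ^ k * (1 + a) \<le> W (s + 1) * (1 + a)"
    using a_pos by (intro mult_right_mono) auto
  also have "\<dots> \<le> W s"
    using W_step_decay[of s "s + 1"] Suc.prems by simp
  finally show ?case
    by (simp add: algebra_simps)
qed

lemma W_exp_decay:
  assumes st: "0 \<le> s" "s \<le> t" "t \<le> T"
  shows "W t \<le> (1 + a) * exp (- ln (1 + a) * (t - s)) * W s"
proof -
  define g where "g = ln (1 + a)"
  define k where "k = nat \<lfloor>t - s\<rfloor>"
  have "real k = of_int \<lfloor>t - s\<rfloor>"
    using st by (simp add: k_def)
  then have k: "real k \<le> t - s" "t - s \<le> real k + 1"
    by (simp_all add: of_int_floor_le)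
  have "exp (g * (t - s)) \<le> exp (g * (real k + 1))"
    using k a_pos by (simp add: g_def mult_left_mono)
  also have "\<dots> = exp (real (Suc k) * g)"
    by (simp add: mult.commute)
  also have "\<dots> = exp g ^ Suc k"
    by (rule exp_of_nat_mult)
  also have "\<dots> = (1 + a) ^ k * (1 + a)"
    using a_pos by (simp add: g_def mult.commute)
  finally have "W t * exp (g * (t - s)) \<le> W t * (1 + a) ^ k * (1 + a)"
    using W_pos[of t] st by (simp add: mult_left_mono)
  also have "\<dots> \<le> W s * (1 + a)"
    using W_geometric_decay[OF st k(1)] a_pos by (simp add: mult_right_mono)
  finally have "W t \<le> W s * (1 + a) / exp (g * (t - s))"
    by (simp add: pos_le_divide_eq)
  then show ?thesis
    by (simp add: g_def exp_minus divide_inverse mult_ac)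
qed

lemma E_le_E_plus_W:
  assumes st: "0 \<le> s" "s \<le> t" "t \<le> T"
  shows "E t \<le> E s + K * W s"
proof -
  have "E t - E s \<le> K * - (W t - W s)"
  proof (rule has_integral_le_ae[OF E_integral_between[OF st]])
    show "((\<lambda>r. K * - W' r) has_integral (K * - (W t - W s))) {s..t}"
      by (intro has_integral_mult_right has_integral_neg W_integral_between[OF st])
    show "AE x in lebesgue. x \<in> {s..t} \<longrightarrow> E' x \<le> K * - W' x"
      using dissipation_pos by eventually_elim (use st in auto)
  qed
  moreover have "0 \<le> K * W t"
    using K_nonneg W_pos[of t] st by simp
  ultimately show ?thesis
    by (simp add: right_diff_distrib)
qed

lemma integral_E_le_W:
  assumes st: "0 \<le> s" "s \<le> t" "t \<le> T"
  shows "b * integral {s..t} E \<le> W s"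
proof -
  have "W t - W s \<le> - b * integral {s..t} E"
  proof (rule has_integral_le_ae[OF W_integral_between[OF st]])
    show "((\<lambda>r. - b * E r) has_integral (- b * integral {s..t} E)) {s..t}"
      using continuous_on_has_integral_subinterval[OF E_continuous st(1,3)] by (rule has_integral_mult_right)
    show "AE x in lebesgue. x \<in> {s..t} \<longrightarrow> W' x \<le> - b * E x"
      using dissipation_pos by eventually_elim (use st in auto)
  qed
  then show ?thesis
    using W_pos[of t] st by simp
qed

text \<open>E is controlled by W one time unit earlier: somewhere in the preceding unit interval
  E is below its mean, hence below W/b, and from there on E grows by at most K W.\<close>

lemma E_le_lagged_W:
  assumes t: "1 \<le> t" "t \<le> T"
  shows "E t \<le> (1 / b + K) * W (t - 1)"
proof -
  have "continuous_on {t - 1..t} E"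
    by (rule continuous_on_subset[OF E_continuous]) (use t in auto)
  then obtain s where s: "s \<in> {t - 1..t}" and s_min: "\<And>y. y \<in> {t - 1..t} \<Longrightarrow> E s \<le> E y"
    using continuous_attains_inf[of "{t - 1..t}" E] t by auto
  have "(t - (t - 1)) * E s \<le> integral {t - 1..t} E"
  proof (rule has_integral_le[OF _ continuous_on_has_integral_subinterval[OF E_continuous]])
    show "((\<lambda>_. E s) has_integral ((t - (t - 1)) * E s)) {t - 1..t}"
      using has_integral_const_real[of "E s" "t - 1" t] by simp
  qed (use s_min t in auto)
  then have "E s \<le> integral {t - 1..t} E"
    by simp
  also have "\<dots> \<le> W (t - 1) / b"
    using integral_E_le_W[of "t - 1" t] t b_pos by (simp add: field_simps)
  finally have "E s \<le> W (t - 1) / b" .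
  moreover have "E t \<le> E s + K * W s"
    using E_le_E_plus_W[of s t] s t by auto
  moreover have "K * W s \<le> K * W (t - 1)"
    using W_antimono[of "t - 1" s] s t K_nonneg by (intro mult_left_mono) auto
  ultimately show ?thesis
    by (simp add: algebra_simps)
qed

lemma E_le_E_0:
  assumes t: "t \<in> {0..T}"
  shows "E t \<le> (1 + K) * E 0"
proof -
  have "E t \<le> E 0 + K * W 0"
    using E_le_E_plus_W[of 0 t] t by auto
  also have "\<dots> \<le> E 0 + K * E 0"
    using W_le_E_0 K_nonneg by (simp add: mult_left_mono)
  finally show ?thesis
    by (simp add: distrib_right)
qed

theorem E_exp_decay:
  assumes t: "t \<in> {0..T}"
  shows "E t \<le> (1 / b + 1 + K) * (1 + a)\<^sup>2 * exp (- ln (1 + a) * t) * E 0"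
proof -
  define C where "C = 1 / b + 1 + K"
  have C: "1 + K \<le> C" "1 / b + K \<le> C" "0 \<le> C"
    using b_pos K_nonneg by (simp_all add: C_def)
  have W0: "0 < W 0" "W 0 \<le> E 0"
    using W_pos[of 0] W_le_E_0 t by auto
  show ?thesis
  proof (cases "t < 1")
    case True
    have growth: "1 \<le> (1 + a)\<^sup>2 * exp (- ln (1 + a) * t)"
      using a_pos True by (intro one_le_sq_mult_exp_ln) auto
    have "E t \<le> (1 + K) * E 0"
      by (rule E_le_E_0[OF t])
    also have "\<dots> \<le> C * E 0"
      using C W0 by (simp add: mult_right_mono)
    also have "\<dots> \<le> C * ((1 + a)\<^sup>2 * exp (- ln (1 + a) * t)) * E 0"
      using growth C W0 mult_left_mono[OF growth C(3)] by (simp add: mult_right_mono)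
    finally show ?thesis
      by (simp add: C_def mult.assoc)
  next
    case False
    have "E t \<le> (1 / b + K) * W (t - 1)"
      using E_le_lagged_W[of t] False t by simp
    also have "\<dots> \<le> (1 / b + K) * ((1 + a) * exp (- ln (1 + a) * (t - 1)) * W 0)"
      using W_exp_decay[of 0 "t - 1"] False t b_pos K_nonneg by (intro mult_left_mono) auto
    also have "\<dots> = (1 / b + K) * ((1 + a)\<^sup>2 * exp (- ln (1 + a) * t)) * W 0"
    proof -
      have "exp (- ln (1 + a) * (t - 1)) = exp (ln (1 + a)) * exp (- ln (1 + a) * t)"
        by (simp add: exp_add[symmetric] algebra_simps)
      then have "(1 + a) * exp (- ln (1 + a) * (t - 1)) = (1 + a)\<^sup>2 * exp (- ln (1 + a) * t)"
        using a_pos by (simp add: power2_eq_square)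
      then show ?thesis
        by (simp only: mult.assoc)
    qed
    also have "\<dots> \<le> C * ((1 + a)\<^sup>2 * exp (- ln (1 + a) * t)) * E 0"
      using C W0 by (intro mult_mono) auto
    finally show ?thesis
      by (simp add: C_def mult.assoc)
  qed
qed

corollary sqrt_E_exp_decay:
  assumes t: "t \<in> {0..T}"
  shows "sqrt (E t) \<le> (1 + a) * sqrt (1 / b + 1 + K) * exp (- (ln (1 + a) / 2) * t) * sqrt (E 0)"
proof -
  have "sqrt (E t) \<le> sqrt ((1 / b + 1 + K) * (1 + a)\<^sup>2 * exp (- ln (1 + a) * t) * E 0)"
    using E_exp_decay[OF t] by (rule real_sqrt_le_mono)
  also have "\<dots> = sqrt (1 / b + 1 + K) * sqrt ((1 + a)\<^sup>2) * sqrt (exp (- ln (1 + a) * t)) * sqrt (E 0)"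
    by (simp only: real_sqrt_mult)
  also have "sqrt (exp (- ln (1 + a) * t)) = exp (- (ln (1 + a) / 2) * t)"
    by (rule real_sqrt_unique) (simp_all add: exp_double[symmetric])
  also have "sqrt ((1 + a)\<^sup>2) = 1 + a"
    using a_pos by simp
  finally show ?thesis
    by (simp only: mult_ac)
qed

end

end

section \<open>Weighted sums of squares of coefficients\<close>

definition qform :: "(nat \<Rightarrow> real) \<Rightarrow> (nat \<Rightarrow> real) \<Rightarrow> (nat \<Rightarrow> real) \<Rightarrow> real" where
  "qform lam c u = (\<Sum>n. c n * lam n powr (-1) * (u n)\<^sup>2)"

text \<open>Along a solution, with w = l t (v t), the summand c_n lam_n^-1 v_n^2 of qform has derivative
  2 c_n lam_n^-1 v_n (- lam_n^2 v_n - lam_n w_n) = c_n (- 2 lam_n v_n^2 - 2 v_n w_n).\<close>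

definition qform_rate ::
  "(nat \<Rightarrow> real) \<Rightarrow> (nat \<Rightarrow> real) \<Rightarrow> (nat \<Rightarrow> real) \<Rightarrow> (nat \<Rightarrow> real) \<Rightarrow> real" where
  "qform_rate lam c u w = (\<Sum>n. c n * (- 2 * lam n * (u n)\<^sup>2 - 2 * u n * w n))"

definition cone_sign :: "nat \<Rightarrow> nat \<Rightarrow> real" where
  "cone_sign N n = (if n < N then -1 else 1)"

lemma Vfun_eq_qform: "Vfun lam N u = qform lam (cone_sign N) u"
  by (simp add: Vfun_def qform_def cone_sign_def)

lemma Hnorm_sq_sums: "in_H lam s u \<Longrightarrow> (\<lambda>n. lam n powr s * (u n)\<^sup>2) sums (Hnorm lam s u)\<^sup>2"
  unfolding in_H_def Hnorm_def
  by (simp add: summable_sums suminf_nonneg)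

lemma Hnorm_nonneg: "in_H lam s u \<Longrightarrow> 0 \<le> Hnorm lam s u"
  unfolding in_H_def Hnorm_def by (simp add: suminf_nonneg)

lemma rate_term_bound:
  fixes c l x y :: real
  assumes "0 \<le> l" and "\<bar>c\<bar> \<le> 1"
  shows "\<bar>c * (- 2 * l * x\<^sup>2 - 2 * x * y)\<bar> \<le> 2 * (l * x\<^sup>2) + (x\<^sup>2 + y\<^sup>2)"
proof -
  have "\<bar>2 * x * y\<bar> \<le> x\<^sup>2 + y\<^sup>2"
    using sum_squares_bound[of x y] sum_squares_bound[of x "- y"] by (simp add: abs_le_iff)
  have "\<bar>c * (- 2 * l * x\<^sup>2 - 2 * x * y)\<bar> \<le> 1 * \<bar>- 2 * l * x\<^sup>2 - 2 * x * y\<bar>"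
    unfolding abs_mult using assms(2) by (rule mult_right_mono) simp
  also have "\<dots> \<le> \<bar>2 * l * x\<^sup>2\<bar> + \<bar>2 * x * y\<bar>"
    by simp
  also have "\<dots> \<le> 2 * (l * x\<^sup>2) + (x\<^sup>2 + y\<^sup>2)"
    using assms(1) \<open>\<bar>2 * x * y\<bar> \<le> x\<^sup>2 + y\<^sup>2\<close> by (simp add: abs_mult)
  finally show ?thesis .
qed

context
  fixes lam :: "nat \<Rightarrow> real"
  assumes lam: "eigenvalues lam"
begin

lemma eigenvalue_ge_first: "lam 0 \<le> lam n"
  using lam by (simp add: eigenvalues_def mono_def)

lemma eigenvalue_pos: "0 < lam n"
  using lam eigenvalue_ge_first[of n] by (simp add: eigenvalues_def)

lemma eigenvalue_nonzero [simp]: "lam n \<noteq> 0" and eigenvalue_abs [simp]: "\<bar>lam n\<bar> = lam n"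
  using eigenvalue_pos[of n] by auto

lemma eigenvalue_powr [simp]:
  "lam n powr 1 = lam n" "lam n powr 0 = 1" "lam n powr (-1) = 1 / lam n"
  using eigenvalue_pos[of n] by (auto simp: powr_neg_one)

lemma in_H_shift:
  assumes "in_H lam (s + 1) u"
  shows "in_H lam s u" and "lam 0 * (Hnorm lam s u)\<^sup>2 \<le> (Hnorm lam (s + 1) u)\<^sup>2"
proof -
  have le: "lam 0 * (lam n powr s * (u n)\<^sup>2) \<le> lam n powr (s + 1) * (u n)\<^sup>2" for n
    using eigenvalue_ge_first[of n] eigenvalue_pos[of n]
    by (simp add: powr_add mult_right_mono mult.left_commute)
  have shifted: "(\<lambda>n. lam n powr (s + 1) * (u n)\<^sup>2 / lam 0) sums ((Hnorm lam (s + 1) u)\<^sup>2 / lam 0)"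
    using Hnorm_sq_sums[OF assms] by (rule sums_divide)
  have term_le: "lam n powr s * (u n)\<^sup>2 \<le> lam n powr (s + 1) * (u n)\<^sup>2 / lam 0" for n
    using le[of n] eigenvalue_pos[of 0] by (simp add: field_simps)
  show s: "in_H lam s u"
    unfolding in_H_def
    by (rule summable_comparison_test'[where N=0, OF sums_summable[OF shifted]]) (simp add: term_le)
  have "(Hnorm lam s u)\<^sup>2 \<le> (Hnorm lam (s + 1) u)\<^sup>2 / lam 0"
    by (rule sums_le[OF _ Hnorm_sq_sums[OF s] shifted]) (rule term_le)
  then show "lam 0 * (Hnorm lam s u)\<^sup>2 \<le> (Hnorm lam (s + 1) u)\<^sup>2"
    using eigenvalue_pos[of 0] by (simp add: field_simps)
qed

lemma in_H_1_imp_in_H_0: "in_H lam 1 u \<Longrightarrow> in_H lam 0 u"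
  using in_H_shift(1)[of 0 u] by simp

lemma Hnorm_0_le_Hnorm_1: "in_H lam 1 u \<Longrightarrow> lam 0 * (Hnorm lam 0 u)\<^sup>2 \<le> (Hnorm lam 1 u)\<^sup>2"
  using in_H_shift(2)[of 0 u] by simp

lemma Hnorm_minus_one_sq: "in_H lam (-1) u \<Longrightarrow> (Hnorm lam (-1) u)\<^sup>2 = qform lam (\<lambda>_. 1) u"
  using Hnorm_sq_sums[of lam "-1" u] by (simp add: qform_def sums_iff)

lemma Hnorm_minus_one_le_Hnorm_0:
  "in_H lam 0 u \<Longrightarrow> lam 0 * (Hnorm lam (-1) u)\<^sup>2 \<le> (Hnorm lam 0 u)\<^sup>2"
  using in_H_shift(2)[of "-1" u] by simp

lemma Vfun_le_Hnorm_minus_one: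
  assumes "in_H lam (-1) u"
  shows "Vfun lam N u \<le> (Hnorm lam (-1) u)\<^sup>2"
proof -
  have sums: "(\<lambda>n. (u n)\<^sup>2 / lam n) sums (Hnorm lam (-1) u)\<^sup>2"
    using Hnorm_sq_sums[OF assms] by simp
  have summable: "summable (\<lambda>n. cone_sign N n * ((u n)\<^sup>2 / lam n))"
    by (rule summable_comparison_test'[where N=0, OF sums_summable[OF sums]])
      (simp add: cone_sign_def eigenvalue_pos less_imp_le)
  have "(\<Sum>n. cone_sign N n * ((u n)\<^sup>2 / lam n)) \<le> (Hnorm lam (-1) u)\<^sup>2"
    by (rule sums_le[OF _ summable_sums[OF summable] sums])
      (simp add: cone_sign_def eigenvalue_pos less_imp_le)
  then show ?thesis
    by (simp add: Vfun_eq_qform qform_def mult.assoc)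
qed

lemma coordinate_sq_le_Hnorm_0:
  assumes "in_H lam 0 u"
  shows "(u n)\<^sup>2 \<le> (Hnorm lam 0 u)\<^sup>2"
proof -
  have "(\<lambda>m. (u m)\<^sup>2) sums (Hnorm lam 0 u)\<^sup>2"
    using Hnorm_sq_sums[OF assms] by simp
  then show ?thesis
    using sum_le_suminf[of "\<lambda>m. (u m)\<^sup>2" "{n}"] by (auto simp: sums_iff)
qed


lemma qform_sums:
  assumes "in_H lam (-1) u" and "\<And>n. \<bar>c n\<bar> \<le> 1"
  shows "(\<lambda>n. c n * lam n powr (-1) * (u n)\<^sup>2) sums qform lam c u"
proof -
  have summable: "summable (\<lambda>n. (u n)\<^sup>2 / lam n)"
    using assms(1) by (simp add: in_H_def)
  have "\<bar>c n\<bar> * ((u n)\<^sup>2 / lam n) \<le> 1 * ((u n)\<^sup>2 / lam n)" for n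
    using assms(2)[of n] eigenvalue_pos[of n] by (intro mult_right_mono) auto
  then have "norm (c n * lam n powr (-1) * (u n)\<^sup>2) \<le> (u n)\<^sup>2 / lam n" for n
    by (simp add: abs_mult)
  then have "summable (\<lambda>n. c n * lam n powr (-1) * (u n)\<^sup>2)"
    by (intro summable_comparison_test'[where N=0, OF summable]) blast
  then show ?thesis
    unfolding qform_def by (rule summable_sums)
qed

lemma rate_series_bound:
  assumes u: "in_H lam 1 u" and w: "in_H lam 0 w" "Hnorm lam 0 w \<le> L * Hnorm lam 0 u"
    and c: "\<And>n. \<bar>c n\<bar> \<le> 1"
  shows "summable (\<lambda>n. c n * (- 2 * lam n * (u n)\<^sup>2 - 2 * u n * w n))"
    and "\<bar>\<Sum>n<K. c n * (- 2 * lam n * (u n)\<^sup>2 - 2 * u n * w n)\<bar>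
           \<le> (2 + (1 + L\<^sup>2) / lam 0) * (Hnorm lam 1 u)\<^sup>2"
proof -
  have u0: "in_H lam 0 u"
    by (rule in_H_1_imp_in_H_0[OF u])
  define b where "b n = 2 * (lam n * (u n)\<^sup>2) + ((u n)\<^sup>2 + (w n)\<^sup>2)" for n
  have "(\<lambda>n. lam n * (u n)\<^sup>2) sums (Hnorm lam 1 u)\<^sup>2" "(\<lambda>n. (u n)\<^sup>2) sums (Hnorm lam 0 u)\<^sup>2"
    "(\<lambda>n. (w n)\<^sup>2) sums (Hnorm lam 0 w)\<^sup>2"
    using Hnorm_sq_sums[OF u] Hnorm_sq_sums[OF u0] Hnorm_sq_sums[OF w(1)] by simp_all
  then have b: "b sums (2 * (Hnorm lam 1 u)\<^sup>2 + ((Hnorm lam 0 u)\<^sup>2 + (Hnorm lam 0 w)\<^sup>2))"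
    unfolding b_def by (intro sums_add sums_mult)
  have term_le: "\<bar>c n * (- 2 * lam n * (u n)\<^sup>2 - 2 * u n * w n)\<bar> \<le> b n" for n
    unfolding b_def using eigenvalue_pos[of n] c[of n] by (intro rate_term_bound) auto
  show "summable (\<lambda>n. c n * (- 2 * lam n * (u n)\<^sup>2 - 2 * u n * w n))"
    by (rule summable_comparison_test'[where N=0, OF sums_summable[OF b]]) (metis real_norm_def term_le)
  have "(Hnorm lam 0 w)\<^sup>2 \<le> (L * Hnorm lam 0 u)\<^sup>2"
    using w Hnorm_nonneg by (intro power_mono) auto
  then have "(Hnorm lam 0 u)\<^sup>2 + (Hnorm lam 0 w)\<^sup>2 \<le> (1 + L\<^sup>2) * (Hnorm lam 0 u)\<^sup>2"
    by (simp add: power_mult_distrib algebra_simps)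
  also have "\<dots> \<le> (1 + L\<^sup>2) * ((Hnorm lam 1 u)\<^sup>2 / lam 0)"
    using Hnorm_0_le_Hnorm_1[OF u] eigenvalue_pos[of 0]
    by (intro mult_left_mono) (simp_all add: field_simps)
  moreover have "(2 + (1 + L\<^sup>2) / lam 0) * (Hnorm lam 1 u)\<^sup>2
      = 2 * (Hnorm lam 1 u)\<^sup>2 + (1 + L\<^sup>2) * ((Hnorm lam 1 u)\<^sup>2 / lam 0)"
    by (simp add: distrib_right)
  ultimately have total: "2 * (Hnorm lam 1 u)\<^sup>2 + ((Hnorm lam 0 u)\<^sup>2 + (Hnorm lam 0 w)\<^sup>2)
      \<le> (2 + (1 + L\<^sup>2) / lam 0) * (Hnorm lam 1 u)\<^sup>2"
    by linarith
  have "\<bar>\<Sum>n<K. c n * (- 2 * lam n * (u n)\<^sup>2 - 2 * u n * w n)\<bar>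
      \<le> (\<Sum>n<K. \<bar>c n * (- 2 * lam n * (u n)\<^sup>2 - 2 * u n * w n)\<bar>)"
    by (rule sum_abs)
  also have "\<dots> \<le> (\<Sum>n<K. b n)"
    by (intro sum_mono term_le)
  also have "\<dots> \<le> (\<Sum>n. b n)"
    by (rule sum_le_suminf[OF sums_summable[OF b]])
      (auto simp: b_def intro!: add_nonneg_nonneg mult_nonneg_nonneg less_imp_le[OF eigenvalue_pos])
  also have "\<dots> \<le> (2 + (1 + L\<^sup>2) / lam 0) * (Hnorm lam 1 u)\<^sup>2"
    using total b by (simp add: sums_iff)
  finally show "\<bar>\<Sum>n<K. c n * (- 2 * lam n * (u n)\<^sup>2 - 2 * u n * w n)\<bar>
      \<le> (2 + (1 + L\<^sup>2) / lam 0) * (Hnorm lam 1 u)\<^sup>2" .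
qed

lemma qform_rate_one_le:
  assumes u: "in_H lam 1 u" and w: "in_H lam 0 w" "Hnorm lam 0 w \<le> L * Hnorm lam 0 u"
  shows "qform_rate lam (\<lambda>_. 1) u w \<le> (1 + L\<^sup>2) * (Hnorm lam 0 u)\<^sup>2"
proof -
  have u0: "in_H lam 0 u"
    by (rule in_H_1_imp_in_H_0[OF u])
  have "(\<lambda>n. (u n)\<^sup>2 + (w n)\<^sup>2) sums ((Hnorm lam 0 u)\<^sup>2 + (Hnorm lam 0 w)\<^sup>2)"
    using Hnorm_sq_sums[OF u0] Hnorm_sq_sums[OF w(1)] by (simp add: sums_add)
  moreover have "summable (\<lambda>n. 1 * (- 2 * lam n * (u n)\<^sup>2 - 2 * u n * w n))"
    by (rule rate_series_bound(1)[OF u w]) simp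
  moreover have "- 2 * lam n * (u n)\<^sup>2 - 2 * u n * w n \<le> (u n)\<^sup>2 + (w n)\<^sup>2" for n
  proof -
    have "- 2 * lam n * (u n)\<^sup>2 \<le> 0"
      using eigenvalue_pos[of n] by (simp add: mult_nonneg_nonneg)
    moreover have "- 2 * u n * w n \<le> (u n)\<^sup>2 + (w n)\<^sup>2"
      using sum_squares_bound[of "u n" "- w n"] by simp
    ultimately show ?thesis
      by linarith
  qed
  ultimately have "qform_rate lam (\<lambda>_. 1) u w \<le> (Hnorm lam 0 u)\<^sup>2 + (Hnorm lam 0 w)\<^sup>2"
    unfolding qform_rate_def by (intro sums_le[OF _ summable_sums]) auto
  moreover have "(Hnorm lam 0 w)\<^sup>2 \<le> (L * Hnorm lam 0 u)\<^sup>2"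
    using w Hnorm_nonneg by (intro power_mono) auto
  ultimately show ?thesis
    by (simp add: power_mult_distrib algebra_simps)
qed

lemma coordinate_rate_bound:
  assumes u: "in_H lam 1 u" and w: "in_H lam 0 w" "Hnorm lam 0 w \<le> L * Hnorm lam 0 u"
  shows "\<bar>- (lam n)\<^sup>2 * u n - lam n * w n\<bar>
           \<le> ((lam n)\<^sup>2 + lam n) * (1 + (1 + L\<^sup>2) / lam 0 * (Hnorm lam 1 u)\<^sup>2)"
proof -
  define B where "B = 1 + (1 + L\<^sup>2) / lam 0 * (Hnorm lam 1 u)\<^sup>2"
  have u0: "in_H lam 0 u"
    by (rule in_H_1_imp_in_H_0[OF u])
  have "(Hnorm lam 0 u)\<^sup>2 \<le> (Hnorm lam 1 u)\<^sup>2 / lam 0"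
    using Hnorm_0_le_Hnorm_1[OF u] eigenvalue_pos[of 0] by (simp add: field_simps)
  then have "(1 + L\<^sup>2) * (Hnorm lam 0 u)\<^sup>2 \<le> (1 + L\<^sup>2) * ((Hnorm lam 1 u)\<^sup>2 / lam 0)"
    by (rule mult_left_mono) simp
  then have "(Hnorm lam 0 u)\<^sup>2 + (L * Hnorm lam 0 u)\<^sup>2 \<le> B - 1"
    by (simp add: B_def power_mult_distrib algebra_simps)
  moreover have "(w n)\<^sup>2 \<le> (L * Hnorm lam 0 u)\<^sup>2"
    using coordinate_sq_le_Hnorm_0[OF w(1), of n] w Hnorm_nonneg
    by (meson order_trans power_mono)
  moreover have "(u n)\<^sup>2 \<le> (Hnorm lam 0 u)\<^sup>2"
    by (rule coordinate_sq_le_Hnorm_0[OF u0])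
  moreover have "0 \<le> (Hnorm lam 0 u)\<^sup>2" "0 \<le> (L * Hnorm lam 0 u)\<^sup>2"
    by simp_all
  ultimately have "(w n)\<^sup>2 \<le> B - 1" "(u n)\<^sup>2 \<le> B - 1"
    by linarith+
  moreover have abs_le: "\<bar>x\<bar> \<le> 1 + x\<^sup>2" for x :: real
    using zero_le_power2[of "\<bar>x\<bar> - 1"] by (simp add: power2_eq_square algebra_simps)
  ultimately have "\<bar>u n\<bar> \<le> B" "\<bar>w n\<bar> \<le> B"
    using abs_le[of "u n"] abs_le[of "w n"] by linarith+
  then have "(lam n)\<^sup>2 * \<bar>u n\<bar> + lam n * \<bar>w n\<bar> \<le> (lam n)\<^sup>2 * B + lam n * B"
    using eigenvalue_pos[of n] by (intro add_mono mult_left_mono) auto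
  moreover have "\<bar>- (lam n)\<^sup>2 * u n - lam n * w n\<bar> \<le> (lam n)\<^sup>2 * \<bar>u n\<bar> + lam n * \<bar>w n\<bar>"
    using abs_triangle_ineq4[of "- (lam n)\<^sup>2 * u n" "lam n * w n"] by (simp add: abs_mult)
  ultimately show ?thesis
    unfolding B_def[symmetric] by (simp add: distrib_right)
qed


end

section \<open>Energy estimates along solutions\<close>

context
  fixes lam :: "nat \<Rightarrow> real" and l :: "real \<Rightarrow> (nat \<Rightarrow> real) \<Rightarrow> (nat \<Rightarrow> real)" and L :: real
  assumes lam: "eigenvalues lam" and l: "bounded_op_family lam l L"
begin

lemma bounded_op: "in_H lam 0 u \<Longrightarrow> in_H lam 0 (l t u) \<and> Hnorm lam 0 (l t u) \<le> L * Hnorm lam 0 u"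
  using l by (simp add: bounded_op_family_def)

lemma solution_in_H_1_ae:
  "solution lam l S T v \<Longrightarrow> AE r in lebesgue. r \<in> {S..T} \<longrightarrow> in_H lam 1 (v r)"
  by (simp add: solution_def)

lemma solution_le: "solution lam l S T v \<Longrightarrow> S \<le> T"
  by (simp add: solution_def)

lemma solution_in_H_minus_one: "solution lam l S T v \<Longrightarrow> t \<in> {S..T} \<Longrightarrow> in_H lam (-1) (v t)"
  by (simp add: solution_def)

lemma solution_Hnorm_1_integrable:
  "solution lam l S T v \<Longrightarrow> (\<lambda>r. (Hnorm lam 1 (v r))\<^sup>2) integrable_on {S..T}"
  by (simp add: solution_def)

lemma solution_coordinate_has_integral:
  "solution lam l S T v \<Longrightarrow> t \<in> {S..T} \<Longrightarrow>
    ((\<lambda>r. - (lam n)\<^sup>2 * v r n - lam n * l r (v r) n) has_integral (v t n - v S n)) {S..t}"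
  by (simp add: solution_def)

lemma solution_coordinate_abs_integrable:
  assumes sol: "solution lam l S T v"
  shows "(\<lambda>r. - (lam n)\<^sup>2 * v r n - lam n * l r (v r) n) absolutely_integrable_on {S..T}"
proof (rule absolutely_integrable_bound_ae)
  show "(\<lambda>r. - (lam n)\<^sup>2 * v r n - lam n * l r (v r) n) integrable_on {S..T}"
    using solution_coordinate_has_integral[OF sol, of T] solution_le[OF sol]
    by (auto dest: has_integral_integrable)
  show "(\<lambda>r. ((lam n)\<^sup>2 + lam n) * (1 + (1 + L\<^sup>2) / lam 0 * (Hnorm lam 1 (v r))\<^sup>2))
      integrable_on {S..T}"
    using solution_Hnorm_1_integrable[OF sol]
    by (intro integrable_on_mult_right integrable_add integrable_const_ivl)
  show "AE r in lebesgue. r \<in> {S..T} \<longrightarrow> \<bar>- (lam n)\<^sup>2 * v r n - lam n * l r (v r) n\<bar>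
      \<le> ((lam n)\<^sup>2 + lam n) * (1 + (1 + L\<^sup>2) / lam 0 * (Hnorm lam 1 (v r))\<^sup>2)"
    using solution_in_H_1_ae[OF sol]
  proof eventually_elim
    case (elim r)
    show ?case
    proof
      assume "r \<in> {S..T}"
      then have u: "in_H lam 1 (v r)"
        using elim by blast
      note w = bounded_op[OF in_H_1_imp_in_H_0[OF lam u], of r]
      show "\<bar>- (lam n)\<^sup>2 * v r n - lam n * l r (v r) n\<bar>
          \<le> ((lam n)\<^sup>2 + lam n) * (1 + (1 + L\<^sup>2) / lam 0 * (Hnorm lam 1 (v r))\<^sup>2)"
        by (rule coordinate_rate_bound[OF lam u conjunct1[OF w] conjunct2[OF w]])
    qed
  qed
qed

lemma solution_coordinate_sq_has_integral:
  assumes sol: "solution lam l S T v" and t: "t \<in> {S..T}"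
  shows "((\<lambda>r. c * (- 2 * lam n * (v r n)\<^sup>2 - 2 * v r n * l r (v r) n))
           has_integral (c / lam n * ((v t n)\<^sup>2 - (v S n)\<^sup>2))) {S..t}"
proof -
  have "((\<lambda>r. 2 * v r n * (- (lam n)\<^sup>2 * v r n - lam n * l r (v r) n))
      has_integral ((v t n)\<^sup>2 - (v S n)\<^sup>2)) {S..t}"
    by (rule indefinite_integral_square[OF solution_coordinate_abs_integrable[OF sol]
          solution_coordinate_has_integral[OF sol] t])
  then have "((\<lambda>r. c / lam n * (2 * v r n * (- (lam n)\<^sup>2 * v r n - lam n * l r (v r) n)))
      has_integral (c / lam n * ((v t n)\<^sup>2 - (v S n)\<^sup>2))) {S..t}"
    by (rule has_integral_mult_right)
  moreover have "c / lam n * (2 * v r n * (- (lam n)\<^sup>2 * v r n - lam n * l r (v r) n))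
      = c * (- 2 * lam n * (v r n)\<^sup>2 - 2 * v r n * l r (v r) n)" for r
    using eigenvalue_pos[OF lam, of n] by (simp add: field_simps power2_eq_square)
  ultimately show ?thesis
    by simp
qed

lemma qform_solution_has_integral:
  assumes sol: "solution lam l S T v" and c: "\<And>n. \<bar>c n\<bar> \<le> 1" and t: "t \<in> {S..T}"
  shows "((\<lambda>r. qform_rate lam c (v r) (l r (v r)))
           has_integral (qform lam c (v t) - qform lam c (v S))) {S..t}"
proof -
  define \<phi> where "\<phi> n r = c n * (- 2 * lam n * (v r n)\<^sup>2 - 2 * v r n * l r (v r) n)" for n r
  define y where "y n = c n / lam n * ((v t n)\<^sup>2 - (v S n)\<^sup>2)" for n
  have coordinate: "(\<phi> n has_integral y n) {S..t}" for n
    unfolding \<phi>_def y_def by (rule solution_coordinate_sq_has_integral[OF sol t])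
  have tT: "S \<le> t" "t \<le> T"
    using t by auto
  show ?thesis
    unfolding qform_rate_def \<phi>_def[symmetric]
  proof (rule has_integral_dominated_convergence_ae)
    show "((\<lambda>r. \<Sum>n<K. \<phi> n r) has_integral (\<Sum>n<K. y n)) {S..t}" for K
      by (intro has_integral_sum coordinate) auto
    show "(\<lambda>r. (2 + (1 + L\<^sup>2) / lam 0) * (Hnorm lam 1 (v r))\<^sup>2) integrable_on {S..t}"
      using integrable_on_subinterval[OF solution_Hnorm_1_integrable[OF sol]] tT
      by (intro integrable_on_mult_right) auto
    show "AE r in lebesgue. r \<in> {S..t} \<longrightarrow>
        (\<forall>K. \<bar>\<Sum>n<K. \<phi> n r\<bar> \<le> (2 + (1 + L\<^sup>2) / lam 0) * (Hnorm lam 1 (v r))\<^sup>2) \<and>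
        (\<lambda>K. \<Sum>n<K. \<phi> n r) \<longlonglongrightarrow> (\<Sum>n. \<phi> n r)"
      using solution_in_H_1_ae[OF sol]
    proof eventually_elim
      case (elim r)
      show ?case
      proof
        assume "r \<in> {S..t}"
        then have u: "in_H lam 1 (v r)"
          using elim tT by auto
        note w = bounded_op[OF in_H_1_imp_in_H_0[OF lam u], of r]
        show "(\<forall>K. \<bar>\<Sum>n<K. \<phi> n r\<bar> \<le> (2 + (1 + L\<^sup>2) / lam 0) * (Hnorm lam 1 (v r))\<^sup>2) \<and>
            (\<lambda>K. \<Sum>n<K. \<phi> n r) \<longlonglongrightarrow> (\<Sum>n. \<phi> n r)"
          using rate_series_bound[OF lam u conjunct1[OF w] conjunct2[OF w] c]
          by (simp add: \<phi>_def summable_LIMSEQ)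
      qed
    qed
    have "(\<lambda>n. c n * lam n powr (-1) * (v t n)\<^sup>2 - c n * lam n powr (-1) * (v S n)\<^sup>2)
        sums (qform lam c (v t) - qform lam c (v S))"
      using solution_in_H_minus_one[OF sol] tT by (intro sums_diff qform_sums[OF lam] c) auto
    then show "(\<lambda>K. \<Sum>n<K. y n) \<longlonglongrightarrow> qform lam c (v t) - qform lam c (v S)"
      by (simp add: y_def sums_def right_diff_distrib eigenvalue_abs[OF lam])
  qed
qed


lemma solution_dissipation_ae:
  assumes sol: "solution lam l S T v"
    and cone: "AE t in lebesgue. t \<in> {S..T} \<longrightarrow>
      (\<exists>D. ((\<lambda>s. Vfun lam N (v s)) has_real_derivative D) (at t within {S..T}) \<and>
           D + \<alpha> t * Vfun lam N (v t) \<le> - \<mu> * (Hnorm lam 0 (v t))\<^sup>2)"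
  shows "AE t in lebesgue. t \<in> {S..T} \<longrightarrow> in_H lam 1 (v t) \<and>
      qform_rate lam (cone_sign N) (v t) (l t (v t)) + \<alpha> t * Vfun lam N (v t)
        \<le> - \<mu> * (Hnorm lam 0 (v t))\<^sup>2"
proof -
  have V: "((\<lambda>r. qform_rate lam (cone_sign N) (v r) (l r (v r)))
      has_integral (Vfun lam N (v t) - Vfun lam N (v S))) {S..t}" if "t \<in> {S..T}" for t
    unfolding Vfun_eq_qform
    by (rule qform_solution_has_integral[OF sol _ that]) (simp add: cone_sign_def)
  have "AE t in lebesgue. t \<in> {S<..<T} \<longrightarrow>
      (\<forall>D. ((\<lambda>s. Vfun lam N (v s)) has_real_derivative D) (at t within {S..T}) \<longrightarrow>
        D = qform_rate lam (cone_sign N) (v t) (l t (v t)))"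
    by (rule derivative_eq_integrand_ae) (rule V)
  then show ?thesis
    using cone solution_in_H_1_ae[OF sol]
      AE_completion[OF AE_lborel_singleton[of S]] AE_completion[OF AE_lborel_singleton[of T]]
  proof eventually_elim
    case (elim t)
    show ?case
    proof
      assume t: "t \<in> {S..T}"
      then have "t \<in> {S<..<T}"
        using elim(4,5) by auto
      moreover obtain D where "((\<lambda>s. Vfun lam N (v s)) has_real_derivative D) (at t within {S..T})"
        and "D + \<alpha> t * Vfun lam N (v t) \<le> - \<mu> * (Hnorm lam 0 (v t))\<^sup>2"
        using elim(2) t by blast
      ultimately show "in_H lam 1 (v t) \<and> qform_rate lam (cone_sign N) (v t) (l t (v t))
          + \<alpha> t * Vfun lam N (v t) \<le> - \<mu> * (Hnorm lam 0 (v t))\<^sup>2"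
        using elim(1,3) t by auto
    qed
  qed
qed

lemma cone_inequality_dissipation:
  assumes u: "in_H lam 1 u" and \<mu>: "0 < \<mu>" and am: "0 < am" and \<alpha>: "am \<le> \<alpha>"
    and V: "0 < Vfun lam N u"
    and ineq: "qform_rate lam (cone_sign N) u (l t u) + \<alpha> * Vfun lam N u \<le> - \<mu> * (Hnorm lam 0 u)\<^sup>2"
  shows "qform_rate lam (cone_sign N) u (l t u) \<le> - am * Vfun lam N u"
    and "qform_rate lam (cone_sign N) u (l t u) \<le> - (\<mu> * lam 0) * (Hnorm lam (-1) u)\<^sup>2"
    and "qform_rate lam (\<lambda>_. 1) u (l t u) \<le> (1 + L\<^sup>2) / \<mu> * - qform_rate lam (cone_sign N) u (l t u)"
proof -
  define W' where "W' = qform_rate lam (cone_sign N) u (l t u)"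
  have u0: "in_H lam 0 u"
    by (rule in_H_1_imp_in_H_0[OF lam u])
  have "am * Vfun lam N u \<le> \<alpha> * Vfun lam N u"
    using \<alpha> V by (simp add: mult_right_mono)
  moreover have "0 \<le> \<mu> * (Hnorm lam 0 u)\<^sup>2" "0 < am * Vfun lam N u"
    using \<mu> am V by simp_all
  ultimately have W': "\<mu> * (Hnorm lam 0 u)\<^sup>2 \<le> - W'" "W' \<le> - am * Vfun lam N u"
    using ineq unfolding W'_def by linarith+
  then show "qform_rate lam (cone_sign N) u (l t u) \<le> - am * Vfun lam N u"
    by (simp add: W'_def)
  have "\<mu> * (lam 0 * (Hnorm lam (-1) u)\<^sup>2) \<le> \<mu> * (Hnorm lam 0 u)\<^sup>2"
    using Hnorm_minus_one_le_Hnorm_0[OF lam u0] \<mu> by simp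
  then show "qform_rate lam (cone_sign N) u (l t u) \<le> - (\<mu> * lam 0) * (Hnorm lam (-1) u)\<^sup>2"
    using W'(1) by (simp add: W'_def)
  note w = bounded_op[OF u0, of t]
  have "qform_rate lam (\<lambda>_. 1) u (l t u) \<le> (1 + L\<^sup>2) * (Hnorm lam 0 u)\<^sup>2"
    by (rule qform_rate_one_le[OF lam u conjunct1[OF w] conjunct2[OF w]])
  also have "\<dots> \<le> (1 + L\<^sup>2) * (- W' / \<mu>)"
    using W'(1) \<mu> by (intro mult_left_mono) (simp_all add: field_simps)
  finally show "qform_rate lam (\<lambda>_. 1) u (l t u) \<le> (1 + L\<^sup>2) / \<mu> * - qform_rate lam (cone_sign N) u (l t u)"
    by (simp add: W'_def)
qed

lemma solution_lyapunov_pair: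
  assumes sol: "solution lam l 0 T v"
    and \<mu>: "0 < \<mu>" and am: "0 < am" and \<alpha>: "\<And>t. am \<le> \<alpha> t"
    and cone: "AE t in lebesgue. t \<in> {0..T} \<longrightarrow>
      (\<exists>D. ((\<lambda>s. Vfun lam N (v s)) has_real_derivative D) (at t within {0..T}) \<and>
           D + \<alpha> t * Vfun lam N (v t) \<le> - \<mu> * (Hnorm lam 0 (v t))\<^sup>2)"
  shows "lyapunov_pair am (\<mu> * lam 0) ((1 + L\<^sup>2) / \<mu>) T
    (\<lambda>t. Vfun lam N (v t)) (\<lambda>t. (Hnorm lam (-1) (v t))\<^sup>2)
    (\<lambda>t. qform_rate lam (cone_sign N) (v t) (l t (v t))) (\<lambda>t. qform_rate lam (\<lambda>_. 1) (v t) (l t (v t)))"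
proof
  show "0 < am" "0 < \<mu> * lam 0" "0 \<le> (1 + L\<^sup>2) / \<mu>"
    using am \<mu> eigenvalue_pos[OF lam, of 0] by simp_all
  have in_H: "in_H lam (-1) (v t)" if "t \<in> {0..T}" for t
    by (rule solution_in_H_minus_one[OF sol that])
  show "((\<lambda>t. qform_rate lam (cone_sign N) (v t) (l t (v t)))
      has_integral (Vfun lam N (v t) - Vfun lam N (v 0))) {0..t}" if "t \<in> {0..T}" for t
    unfolding Vfun_eq_qform
    by (rule qform_solution_has_integral[OF sol _ that]) (simp add: cone_sign_def)
  show "((\<lambda>t. qform_rate lam (\<lambda>_. 1) (v t) (l t (v t)))
      has_integral ((Hnorm lam (-1) (v t))\<^sup>2 - (Hnorm lam (-1) (v 0))\<^sup>2)) {0..t}" if "t \<in> {0..T}" for t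
    using qform_solution_has_integral[OF sol _ that, of "\<lambda>_. 1"] in_H[OF that] in_H[of 0] that
    by (simp add: Hnorm_minus_one_sq[OF lam])
  show "Vfun lam N (v 0) \<le> (Hnorm lam (-1) (v 0))\<^sup>2"
    using in_H[of 0] solution_le[OF sol] by (simp add: Vfun_le_Hnorm_minus_one[OF lam])
  show "AE x in lebesgue. x \<in> {0..T} \<longrightarrow> 0 < Vfun lam N (v x) \<longrightarrow>
      qform_rate lam (cone_sign N) (v x) (l x (v x)) \<le> - am * Vfun lam N (v x) \<and>
      qform_rate lam (cone_sign N) (v x) (l x (v x)) \<le> - (\<mu> * lam 0) * (Hnorm lam (-1) (v x))\<^sup>2 \<and>
      qform_rate lam (\<lambda>_. 1) (v x) (l x (v x))
        \<le> (1 + L\<^sup>2) / \<mu> * - qform_rate lam (cone_sign N) (v x) (l x (v x))"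
    using solution_dissipation_ae[OF sol cone]
  proof eventually_elim
    case (elim x)
    show ?case
    proof (intro impI)
      assume "x \<in> {0..T}" and V: "0 < Vfun lam N (v x)"
      then have u: "in_H lam 1 (v x)" and ineq: "qform_rate lam (cone_sign N) (v x) (l x (v x))
          + \<alpha> x * Vfun lam N (v x) \<le> - \<mu> * (Hnorm lam 0 (v x))\<^sup>2"
        using elim by simp_all
      show "qform_rate lam (cone_sign N) (v x) (l x (v x)) \<le> - am * Vfun lam N (v x) \<and>
          qform_rate lam (cone_sign N) (v x) (l x (v x)) \<le> - (\<mu> * lam 0) * (Hnorm lam (-1) (v x))\<^sup>2 \<and>
          qform_rate lam (\<lambda>_. 1) (v x) (l x (v x))
            \<le> (1 + L\<^sup>2) / \<mu> * - qform_rate lam (cone_sign N) (v x) (l x (v x))"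
        using cone_inequality_dissipation[OF u \<mu> am \<alpha>[of x] V ineq] by blast
    qed
  qed
qed

lemma solution_cone_dichotomy:
  assumes sol: "solution lam l 0 T v"
    and \<mu>: "0 < \<mu>" and am: "0 < am" and \<alpha>: "\<And>t. am \<le> \<alpha> t"
    and cone: "AE t in lebesgue. t \<in> {0..T} \<longrightarrow>
      (\<exists>D. ((\<lambda>s. Vfun lam N (v s)) has_real_derivative D) (at t within {0..T}) \<and>
           D + \<alpha> t * Vfun lam N (v t) \<le> - \<mu> * (Hnorm lam 0 (v t))\<^sup>2)"
  shows "(v 0 \<in> Kplus lam N \<longrightarrow> (\<forall>t\<in>{0..T}. v t \<in> Kplus lam N)) \<and>
    (v T \<notin> Kplus lam N \<longrightarrow> (\<forall>t\<in>{0..T}. Hnorm lam (-1) (v t)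
       \<le> (1 + am) * sqrt (1 / (\<mu> * lam 0) + 1 + (1 + L\<^sup>2) / \<mu>) * exp (- (ln (1 + am) / 2) * t)
          * Hnorm lam (-1) (v 0)))"
proof -
  interpret lyapunov_pair am "\<mu> * lam 0" "(1 + L\<^sup>2) / \<mu>" T
    "\<lambda>t. Vfun lam N (v t)" "\<lambda>t. (Hnorm lam (-1) (v t))\<^sup>2"
    "\<lambda>t. qform_rate lam (cone_sign N) (v t) (l t (v t))" "\<lambda>t. qform_rate lam (\<lambda>_. 1) (v t) (l t (v t))"
    by (rule solution_lyapunov_pair[OF sol \<mu> am \<alpha> cone])
  have in_H: "in_H lam (-1) (v t)" if "t \<in> {0..T}" for t
    by (rule solution_in_H_minus_one[OF sol that])
  have Hnorm_eq: "Hnorm lam (-1) (v t) = sqrt ((Hnorm lam (-1) (v t))\<^sup>2)" if "t \<in> {0..T}" for t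
    using Hnorm_nonneg[OF in_H[OF that]] by simp
  have T: "0 \<in> {0..T}" "T \<in> {0..T}"
    using solution_le[OF sol] by auto
  show ?thesis
  proof (intro conjI impI ballI)
    fix t assume "v 0 \<in> Kplus lam N" and t: "t \<in> {0..T}"
    then show "v t \<in> Kplus lam N"
      using W_nonpos_forward[of 0 t] in_H by (simp add: Kplus_def)
  next
    fix t assume "v T \<notin> Kplus lam N" and t: "t \<in> {0..T}"
    then have "0 < Vfun lam N (v T)"
      using in_H[OF T(2)] by (simp add: Kplus_def not_le)
    then show "Hnorm lam (-1) (v t) \<le> (1 + am) * sqrt (1 / (\<mu> * lam 0) + 1 + (1 + L\<^sup>2) / \<mu>)
        * exp (- (ln (1 + am) / 2) * t) * Hnorm lam (-1) (v 0)"
      using sqrt_E_exp_decay[OF _ t] Hnorm_eq[OF t] Hnorm_eq[OF T(1)] by simp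
  qed
qed

end

theorem corollary3p3:
  fixes lam :: "nat \<Rightarrow> real" and N :: nat
    and l :: "real \<Rightarrow> (nat \<Rightarrow> real) \<Rightarrow> (nat \<Rightarrow> real)" and L :: real
  assumes "eigenvalues lam"
    and "bounded_op_family lam l L"
    and "strong_cone_condition lam N l"
  shows "\<exists>C>0. \<exists>\<gamma>>0. \<forall>T>0. \<forall>v. solution lam l 0 T v \<longrightarrow>
           ((v 0 \<in> Kplus lam N \<longrightarrow> (\<forall>t\<in>{0..T}. v t \<in> Kplus lam N)) \<and>
            (v T \<notin> Kplus lam N \<longrightarrow>
               (\<forall>t\<in>{0..T}. Hnorm lam (-1) (v t) \<le> C * exp (- \<gamma> * t) * Hnorm lam (-1) (v 0))))"
proof -
  obtain \<mu> \<alpha> am where \<mu>: "0 < \<mu>" and am: "0 < am" and \<alpha>: "\<And>t. am \<le> \<alpha> t"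
    and cone: "\<And>S T v. solution lam l S T v \<Longrightarrow> AE t in lebesgue. t \<in> {S..T} \<longrightarrow>
      (\<exists>D. ((\<lambda>s. Vfun lam N (v s)) has_real_derivative D) (at t within {S..T}) \<and>
           D + \<alpha> t * Vfun lam N (v t) \<le> - \<mu> * (Hnorm lam 0 (v t))\<^sup>2)"
    using assms(3) unfolding strong_cone_condition_def by blast
  define C where "C = (1 + am) * sqrt (1 / (\<mu> * lam 0) + 1 + (1 + L\<^sup>2) / \<mu>)"
  have "0 \<le> 1 / (\<mu> * lam 0)" "0 \<le> (1 + L\<^sup>2) / \<mu>"
    using \<mu> eigenvalue_pos[OF assms(1), of 0] by simp_all
  then have "0 < 1 / (\<mu> * lam 0) + 1 + (1 + L\<^sup>2) / \<mu>"
    by linarith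
  then have "0 < C"
    unfolding C_def using am by simp
  moreover have "0 < ln (1 + am) / 2"
    using am by simp
  moreover have "\<forall>T>0. \<forall>v. solution lam l 0 T v \<longrightarrow>
      ((v 0 \<in> Kplus lam N \<longrightarrow> (\<forall>t\<in>{0..T}. v t \<in> Kplus lam N)) \<and>
       (v T \<notin> Kplus lam N \<longrightarrow> (\<forall>t\<in>{0..T}.
          Hnorm lam (-1) (v t) \<le> C * exp (- (ln (1 + am) / 2) * t) * Hnorm lam (-1) (v 0))))"
    unfolding C_def using solution_cone_dichotomy[OF assms(1,2) _ \<mu> am \<alpha> cone] by blast
  ultimately show ?thesis
    by (intro exI[of _ C] exI[of _ "ln (1 + am) / 2"] conjI)
qed

end
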